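(* Let $(X,S)$ be an $S$-metric space, $r\ge0$, and let $\{\xi_n\}$, $\{\eta_n\}$ be sequences in $X$ such that $S(\xi_n,\xi_n,\eta_n)\to0$ as $n\to\infty$. Then $\{\xi_n\}$ is $r$-statistically convergent to $\xi$ if and only if $\{\eta_n\}$ is $r$-statistically convergent to $\xi$.
   Context: An $S$-metric on a nonempty set $X$ is a function $S:X^3\to[0,\infty)$ such that for all $x,y,z,a\in X$: $S(x,y,z)=0$ if and only if $x=y=z$, and $S(x,y,z)\le S(x,x,a)+S(y,y,a)+S(z,z,a)$. For $B\subset\mathbb N$ the natural density is $\delta(B)=\lim_{n\to\infty}\frac{|\{k\in B:k\le n\}|}{n}$ when the limit exists. For $r\ge0$, $\{\xi_n\}$ is $r$-statistically convergent to $\xi$ if for every $\varepsilon>0$, $\delta(\{n\in\mathbb N: S(\xi_n,\xi_n,\xi)\ge r+\varepsilon\})=0$. *)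

theory Defs
  imports Complex_Main
begin

definition S_metric :: "'a set \<Rightarrow> ('a \<Rightarrow> 'a \<Rightarrow> 'a \<Rightarrow> real) \<Rightarrow> bool" where
  "S_metric X S \<longleftrightarrow> X \<noteq> {} \<and>
     (\<forall>x\<in>X. \<forall>y\<in>X. \<forall>z\<in>X. S x y z \<ge> 0) \<and>
     (\<forall>x\<in>X. \<forall>y\<in>X. \<forall>z\<in>X. S x y z = 0 \<longleftrightarrow> x = y \<and> y = z) \<and>
     (\<forall>x\<in>X. \<forall>y\<in>X. \<forall>z\<in>X. \<forall>a\<in>X. S x y z \<le> S x x a + S y y a + S z z a)"

definition has_natural_density :: "nat set \<Rightarrow> real \<Rightarrow> bool" where
  "has_natural_density B d \<longleftrightarrow>
     (\<lambda>n. real (card {k \<in> B. 1 \<le> k \<and> k \<le> n}) / real n) \<longlonglongrightarrow> d"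

definition r_stat_convergent ::
  "('a \<Rightarrow> 'a \<Rightarrow> 'a \<Rightarrow> real) \<Rightarrow> real \<Rightarrow> (nat \<Rightarrow> 'a) \<Rightarrow> 'a \<Rightarrow> bool" where
  "r_stat_convergent S r xs x \<longleftrightarrow>
     (\<forall>\<epsilon>>0. has_natural_density {n. n \<ge> 1 \<and> S (xs n) (xs n) x \<ge> r + \<epsilon>} 0)"

end

theory Submission
  imports Defs
begin

text \<open>By the S-metric inequality and the symmetry S(a,a,b) = S(b,b,a),
  S(eta n, eta n, x) \<le> S(xi n, xi n, x) + 2 S(xi n, xi n, eta n), and symmetrically.
  The error term eventually stays below \<epsilon>/2, so the set of n with S(eta n, eta n, x) \<ge> r + \<epsilon>
  is contained, up to finitely many indices, in the set of n with S(xi n, xi n, x) \<ge> r + \<epsilon>/2;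
  and a subset of a density-zero set plus a finite set has density zero.\<close>

lemma has_natural_density_0_subset:
  assumes "A \<subseteq> B \<union> F" "has_natural_density B 0" "finite F"
  shows "has_natural_density A 0"
  unfolding has_natural_density_def
proof (rule real_tendsto_sandwich[where f = "\<lambda>n. 0"])
  let ?count = "\<lambda>C n. real (card {k \<in> C. 1 \<le> k \<and> k \<le> n})"
  have "?count A n \<le> ?count B n + real (card F)" for n
  proof -
    have "{k \<in> A. 1 \<le> k \<and> k \<le> n} \<subseteq> {k \<in> B. 1 \<le> k \<and> k \<le> n} \<union> F"
      using assms(1) by auto
    then have "card {k \<in> A. 1 \<le> k \<and> k \<le> n} \<le> card ({k \<in> B. 1 \<le> k \<and> k \<le> n} \<union> F)"
      using assms(3) by (intro card_mono) auto
    also have "\<dots> \<le> card {k \<in> B. 1 \<le> k \<and> k \<le> n} + card F"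
      by (rule card_Un_le)
    finally show ?thesis by linarith
  qed
  then show "\<forall>\<^sub>F n in sequentially. ?count A n / real n \<le> ?count B n / real n + real (card F) / real n"
    by (simp add: add_divide_distrib[symmetric] divide_right_mono)
  show "(\<lambda>n. ?count B n / real n + real (card F) / real n) \<longlonglongrightarrow> 0"
    using tendsto_add[OF assms(2)[unfolded has_natural_density_def] lim_const_over_n] by simp
qed simp_all

lemma has_natural_density_0_exceedances_perturb:
  fixes T U d :: "nat \<Rightarrow> real"
  assumes U: "\<forall>\<epsilon>>0. has_natural_density {n. n \<ge> 1 \<and> U n \<ge> r + \<epsilon>} 0"
    and bound: "\<And>n. T n \<le> U n + d n" and d: "d \<longlonglongrightarrow> 0"
  shows "\<forall>\<epsilon>>0. has_natural_density {n. n \<ge> 1 \<and> T n \<ge> r + \<epsilon>} 0"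
proof (intro allI impI)
  fix \<epsilon> :: real
  assume "\<epsilon> > 0"
  then obtain N where N: "\<And>n. n \<ge> N \<Longrightarrow> \<bar>d n\<bar> < \<epsilon>/2"
    using LIMSEQ_D[OF d, of "\<epsilon>/2"] by auto
  have "U n \<ge> r + \<epsilon>/2" if "n \<ge> N" "T n \<ge> r + \<epsilon>" for n
    using N[OF \<open>n \<ge> N\<close>] bound[of n] \<open>T n \<ge> r + \<epsilon>\<close> by linarith
  then have "{n. n \<ge> 1 \<and> T n \<ge> r + \<epsilon>} \<subseteq> {n. n \<ge> 1 \<and> U n \<ge> r + \<epsilon>/2} \<union> {..<N}"
    by (auto simp: not_less)
  moreover have "has_natural_density {n. n \<ge> 1 \<and> U n \<ge> r + \<epsilon>/2} 0"
    using U \<open>\<epsilon> > 0\<close> by simp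
  ultimately show "has_natural_density {n. n \<ge> 1 \<and> T n \<ge> r + \<epsilon>} 0"
    by (rule has_natural_density_0_subset) simp
qed

lemma S_metric_diag_zero:
  assumes "S_metric X S" "a \<in> X"
  shows "S a a a = 0"
  using assms unfolding S_metric_def by blast

lemma S_metric_triangle:
  assumes "S_metric X S" "a \<in> X" "b \<in> X" "c \<in> X" "z \<in> X"
  shows "S a b c \<le> S a a z + S b b z + S c c z"
  using assms unfolding S_metric_def by blast

lemma S_metric_sym:
  assumes "S_metric X S" "a \<in> X" "b \<in> X"
  shows "S a a b = S b b a"
proof -
  have "S a a b \<le> S b b a"
    using S_metric_triangle[OF assms(1) assms(2) assms(2) assms(3) assms(2)]
      S_metric_diag_zero[OF assms(1,2)] by simp
  moreover have "S b b a \<le> S a a b"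
    using S_metric_triangle[OF assms(1) assms(3) assms(3) assms(2) assms(3)]
      S_metric_diag_zero[OF assms(1,3)] by simp
  ultimately show ?thesis by simp
qed

lemma S_metric_diag_triangle:
  assumes "S_metric X S" "a \<in> X" "b \<in> X" "c \<in> X"
  shows "S a a c \<le> S b b c + 2 * S b b a"
  using S_metric_triangle[OF assms(1,2,2,4,3)] S_metric_sym[OF assms(1,2,3)]
    S_metric_sym[OF assms(1,4,3)] by simp

lemma r_stat_convergent_transfer:
  assumes "S_metric X S" "\<And>n. xi n \<in> X" "\<And>n. eta n \<in> X" "x \<in> X"
    and "(\<lambda>n. S (xi n) (xi n) (eta n)) \<longlonglongrightarrow> 0"
    and "r_stat_convergent S r xi x"
  shows "r_stat_convergent S r eta x"
proof -
  have bound: "S (eta n) (eta n) x \<le> S (xi n) (xi n) x + 2 * S (xi n) (xi n) (eta n)" for n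
    using S_metric_diag_triangle[OF assms(1) assms(3) assms(2) assms(4)] .
  have "(\<lambda>n. 2 * S (xi n) (xi n) (eta n)) \<longlonglongrightarrow> 0"
    using tendsto_mult_right_zero[OF assms(5)] .
  from has_natural_density_0_exceedances_perturb
      [OF assms(6)[unfolded r_stat_convergent_def] bound this]
  show ?thesis
    unfolding r_stat_convergent_def .
qed

theorem theorem4p8:
  fixes X :: "'a set" and S :: "'a \<Rightarrow> 'a \<Rightarrow> 'a \<Rightarrow> real"
    and r :: real and xi eta :: "nat \<Rightarrow> 'a" and x :: 'a
  assumes "S_metric X S" and "r \<ge> 0"
    and "\<And>n. xi n \<in> X" and "\<And>n. eta n \<in> X" and "x \<in> X"
    and "(\<lambda>n. S (xi n) (xi n) (eta n)) \<longlonglongrightarrow> 0"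
  shows "r_stat_convergent S r xi x \<longleftrightarrow> r_stat_convergent S r eta x"
proof -
  have "(\<lambda>n. S (eta n) (eta n) (xi n)) \<longlonglongrightarrow> 0"
    using assms(6) by (simp add: S_metric_sym[OF assms(1) assms(4) assms(3)])
  then show ?thesis
    using r_stat_convergent_transfer[OF assms(1,3,4,5,6)]
      r_stat_convergent_transfer[OF assms(1,4,3,5) \<open>(\<lambda>n. S (eta n) (eta n) (xi n)) \<longlonglongrightarrow> 0\<close>]
    by blast
qed

end
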